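(* Let $G=(V,E)$ be an infinite, connected, locally finite graph (no self-loops) and let $v\in V$. Then there exists a finite Borel measure $\mu$ on $[-1,1]$ such that for every integer $t\geq 2$, $$\mathbb{P}_v(\tau_v=t)=\int_{-1}^{1} x^{t-2}\,d\mu(x).$$
   Context: $(X_t)$ is simple random walk on $G$ with $X_0=v$ and $\tau_v=\min\{t\geq 1:X_t=v\}$. *)

theory Defs
  imports "HOL-Analysis.Analysis"
begin

text \<open>A (multi)graph on vertex type 'a is given by edge multiplicities
  E u w (number of edges between u and w).\<close>

definition nbrs :: "('a \<Rightarrow> 'a \<Rightarrow> nat) \<Rightarrow> 'a \<Rightarrow> 'a set" where
  "nbrs E u = {w. E u w > 0}"

definition deg :: "('a \<Rightarrow> 'a \<Rightarrow> nat) \<Rightarrow> 'a \<Rightarrow> nat" where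
  "deg E u = (\<Sum>w\<in>nbrs E u. E u w)"

definition infinite_connected_locally_finite_graph :: "('a \<Rightarrow> 'a \<Rightarrow> nat) \<Rightarrow> bool" where
  "infinite_connected_locally_finite_graph E \<longleftrightarrow>
     infinite (UNIV :: 'a set) \<and>
     (\<forall>u w. E u w = E w u) \<and>
     (\<forall>u. E u u = 0) \<and>
     (\<forall>u. finite (nbrs E u)) \<and>
     (\<forall>u w. (\<lambda>x y. E x y > 0)\<^sup>*\<^sup>* u w)"

definition srw_step :: "('a \<Rightarrow> 'a \<Rightarrow> nat) \<Rightarrow> 'a \<Rightarrow> 'a \<Rightarrow> real" where
  "srw_step E u w = real (E u w) / real (deg E u)"

text \<open>Paths x_0 = v, x_1, ..., x_t = v of length t along edges avoiding v at
  times 1..t-1, i.e. trajectories realising tau_v = t.\<close>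
definition first_return_paths :: "('a \<Rightarrow> 'a \<Rightarrow> nat) \<Rightarrow> 'a \<Rightarrow> nat \<Rightarrow> 'a list set" where
  "first_return_paths E v t = {p. length p = Suc t \<and> p ! 0 = v \<and> p ! t = v \<and>
      (\<forall>i\<in>{1..<t}. p ! i \<noteq> v) \<and> (\<forall>i<t. E (p ! i) (p ! Suc i) > 0)}"

text \<open>P_v(tau_v = t) for simple random walk started at v, where
  tau_v = min {t \<ge> 1. X_t = v}.\<close>
definition first_return_prob :: "('a \<Rightarrow> 'a \<Rightarrow> nat) \<Rightarrow> 'a \<Rightarrow> nat \<Rightarrow> real" where
  "first_return_prob E v t =
     (\<Sum>p\<in>first_return_paths E v t. \<Prod>i<t. srw_step E (p ! i) (p ! Suc i))"

end

theory Submission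
  imports Defs "HOL-Probability.Probability"
begin

(*
  Kill the walk on hitting v. For n <= N the probability P_v(tau_v = n + 2) only involves
  the finite ball B of radius N + 2 around v, and equals <h, A^n h> / deg v, where A is the
  killed transition operator on S = B - {v}, h x = P(x, v) and <f, g> = sum_x deg x f x g x.
  Reversibility makes A self-adjoint for this inner product and sub-stochasticity makes it a
  contraction, so the finite-dimensional spectral theorem writes <h, A^n h> = sum_i c_i l_i^n
  with c_i >= 0 and |l_i| <= 1: for each N the first N + 1 values are the moments of a finite
  atomic measure on [-1,1]. Normalised, these measures are tight; by Helly's selection theorem
  a subsequence converges weakly, and the rescaled limit has all the required moments.
*)

lemma compact_Pi_UNIV:
  fixes T :: "'a \<Rightarrow> 'b::topological_space set"
  assumes "\<And>i. compact (T i)"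
  shows "compact (Pi UNIV T)"
proof -
  have "compactin (product_topology (\<lambda>i. euclidean) UNIV) (PiE UNIV T)"
    using assms by (simp add: compactin_PiE)
  then show ?thesis by (simp add: euclidean_product_topology PiE_UNIV_domain)
qed

lemma continuous_on_coordinate [continuous_intros]:
  "continuous_on X (\<lambda>f. f i :: 'b::topological_space)"
  by (rule continuous_on_subset[OF continuous_on_product_coordinates]) simp

lemma nonneg_eq_0_if_quadratic_nonpos:
  fixes Y D :: real
  assumes "\<And>t. 2*t*Y + t^2*D \<le> 0" and "Y \<ge> 0"
  shows "Y = 0"
proof (rule ccontr)
  assume "Y \<noteq> 0"
  then have Y: "Y > 0" using assms(2) by simp
  define t where "t = Y / (\<bar>D\<bar> + 1)"
  have t: "t > 0" using Y by (simp add: t_def)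
  have "t * \<bar>D\<bar> \<le> Y" unfolding t_def using Y by (simp add: field_simps)
  then have "t^2 * \<bar>D\<bar> \<le> t * Y" using t by (simp add: power2_eq_square mult.assoc mult_left_mono)
  moreover have "t^2 * D \<ge> - (t^2 * \<bar>D\<bar>)" using mult_left_mono[of "-\<bar>D\<bar>" D "t^2"] by simp
  moreover have "t * Y > 0" using t Y by simp
  ultimately have "2*t*Y + t^2*D > 0" by linarith
  with assms(1)[of t] show False by simp
qed

text \<open>A finite measure on \<open>[-1,1]\<close> with finitely many atoms is given by a list of
  pairs (point, weight); \<open>atom_sum xs f\<close> is the integral of \<open>f\<close> against it.\<close>
definition atoms_in_interval :: "(real \<times> real) list \<Rightarrow> bool" where
  "atoms_in_interval xs \<longleftrightarrow> (\<forall>(x,p)\<in>set xs. 0 \<le> p \<and> x \<in> {-1..1})"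

definition atom_sum :: "(real \<times> real) list \<Rightarrow> (real \<Rightarrow> real) \<Rightarrow> real" where
  "atom_sum xs f = (\<Sum>(x,p)\<leftarrow>xs. p * f x)"

lemma atoms_in_interval_simps [simp]:
  "atoms_in_interval []"
  "atoms_in_interval ((x,p) # xs) \<longleftrightarrow> 0 \<le> p \<and> x \<in> {-1..1} \<and> atoms_in_interval xs"
  by (auto simp: atoms_in_interval_def)

lemma atom_sum_simps [simp]:
  "atom_sum [] f = 0"
  "atom_sum ((x,p) # xs) f = p * f x + atom_sum xs f"
  by (simp_all add: atom_sum_def)

lemma atom_sum_nonneg:
  "atoms_in_interval xs \<Longrightarrow> (\<And>x. x \<in> {-1..1} \<Longrightarrow> f x \<ge> 0) \<Longrightarrow> atom_sum xs f \<ge> 0"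
  by (induction xs) auto

lemma atom_sum_rescale:
  "atom_sum (map (\<lambda>(x,p). (x, p / d)) xs) f = atom_sum xs f / d"
  by (induction xs) (auto simp: add_divide_distrib)

lemma atoms_in_interval_rescale:
  "atoms_in_interval xs \<Longrightarrow> 0 \<le> d \<Longrightarrow> atoms_in_interval (map (\<lambda>(x,p). (x, p / d)) xs)"
  by (induction xs) auto

lemma atom_sum_moment_bound:
  "atoms_in_interval xs \<Longrightarrow> \<bar>atom_sum xs (\<lambda>x. x^n)\<bar> \<le> atom_sum xs (\<lambda>_. 1)"
proof (induction xs)
  case (Cons xp xs)
  obtain x p where xp: "xp = (x,p)" by (cases xp)
  have p: "0 \<le> p" and x: "\<bar>x\<bar> \<le> 1" using Cons.prems xp by auto
  have "\<bar>p * x^n\<bar> \<le> p"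
    using mult_left_le[OF power_le_one[OF abs_ge_zero x] p] p by (simp add: abs_mult power_abs)
  then show ?case using Cons xp by (auto intro: order_trans[OF abs_triangle_ineq])
qed simp

locale reversible_kernel =
  fixes S :: "'a set" and w :: "'a \<Rightarrow> real" and K :: "'a \<Rightarrow> 'a \<Rightarrow> real"
  assumes finite_S: "finite S" and w_pos: "\<And>x. x \<in> S \<Longrightarrow> w x > 0"
    and reversible: "\<And>x y. x \<in> S \<Longrightarrow> y \<in> S \<Longrightarrow> w x * K x y = w y * K y x"
    and K_nonneg: "\<And>x y. x \<in> S \<Longrightarrow> y \<in> S \<Longrightarrow> K x y \<ge> 0"
    and K_row_sum: "\<And>x. x \<in> S \<Longrightarrow> (\<Sum>y\<in>S. K x y) \<le> 1"
begin

definition ip :: "('a \<Rightarrow> real) \<Rightarrow> ('a \<Rightarrow> real) \<Rightarrow> real" where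
  "ip f g = (\<Sum>x\<in>S. w x * f x * g x)"

definition A :: "('a \<Rightarrow> real) \<Rightarrow> 'a \<Rightarrow> real" where
  "A f = (\<lambda>x. if x \<in> S then (\<Sum>y\<in>S. K x y * f y) else 0)"

definition supported :: "('a \<Rightarrow> real) set" where
  "supported = {f. \<forall>x. x \<notin> S \<longrightarrow> f x = 0}"

lemma ip_sym: "ip f g = ip g f"
  unfolding ip_def by (simp add: mult_ac)

lemma ip_lincomb_left: "ip (\<lambda>x. a * f x + g x) k = a * ip f k + ip g k"
  unfolding ip_def by (simp add: algebra_simps sum.distrib sum_distrib_left)

lemma ip_lincomb_right: "ip k (\<lambda>x. a * f x + g x) = a * ip k f + ip k g"
  using ip_lincomb_left ip_sym by metis

lemma ip_scale_left: "ip (\<lambda>x. a * f x) k = a * ip f k"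
  unfolding ip_def by (simp add: algebra_simps sum_distrib_left)

lemma ip_scale_right: "ip k (\<lambda>x. a * f x) = a * ip k f"
  using ip_scale_left ip_sym by metis

lemma ip_sum_right: "ip f (\<lambda>x. \<Sum>i\<in>I. c i * u i x) = (\<Sum>i\<in>I. c i * ip f (u i))"
  unfolding ip_def sum_distrib_left by (subst sum.swap) (simp add: mult_ac)

lemma ip_sum_left: "ip (\<lambda>x. \<Sum>i\<in>I. c i * u i x) f = (\<Sum>i\<in>I. c i * ip (u i) f)"
  using ip_sum_right ip_sym by simp

lemma ip_diff_self: "ip (\<lambda>x. f x - g x) (\<lambda>x. f x - g x) = ip f f - 2 * ip f g + ip g g"
proof -
  have diff: "(\<lambda>x. f x - g x) = (\<lambda>x. (-1) * g x + f x)" by auto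
  show ?thesis unfolding diff ip_lincomb_left ip_lincomb_right using ip_sym[of f g] by simp
qed

lemma weighted_square_nonneg: "x \<in> S \<Longrightarrow> 0 \<le> w x * f x * f x"
  using w_pos[of x] by (simp add: mult.assoc)

lemma ip_nonneg: "ip f f \<ge> 0"
  unfolding ip_def by (intro sum_nonneg weighted_square_nonneg)

lemma weighted_square_le_ip: "x \<in> S \<Longrightarrow> w x * f x * f x \<le> ip f f"
  unfolding ip_def by (rule member_le_sum) (auto simp: finite_S intro!: weighted_square_nonneg)

lemma ip_self_eq_0: assumes "f \<in> supported" "ip f f = 0" shows "f = (\<lambda>x. 0)"
proof
  fix x show "f x = 0"
  proof (cases "x \<in> S")
    case True
    have "w x * (f x * f x) \<le> 0" using weighted_square_le_ip[OF True, of f] assms(2)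
      by (simp add: mult.assoc)
    then have "f x * f x \<le> 0" using w_pos[OF True] by (simp add: mult_le_0_iff)
    then show ?thesis by (metis mult_le_0_iff order_antisym_conv zero_le_square)
  next
    case False then show ?thesis using assms(1) by (auto simp: supported_def)
  qed
qed

lemma A_supported: "A f \<in> supported"
  unfolding A_def supported_def by auto

lemma A_lincomb: "A (\<lambda>x. a * f x + g x) = (\<lambda>x. a * A f x + A g x)"
  unfolding A_def by (auto simp: algebra_simps sum.distrib sum_distrib_left)

lemma A_scale: "A (\<lambda>x. a * f x) = (\<lambda>x. a * A f x)"
  unfolding A_def by (auto simp: algebra_simps sum_distrib_left)

lemma ip_A_expand: "ip f (A g) = (\<Sum>x\<in>S. \<Sum>y\<in>S. (w x * K x y) * f x * g y)"
  unfolding ip_def A_def by (auto simp: sum_distrib_left mult_ac intro!: sum.cong)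

text \<open>Reversibility makes \<open>A\<close> self-adjoint for the weighted inner product.\<close>
lemma A_self_adjoint: "ip f (A g) = ip (A f) g"
proof -
  have "ip (A f) g = (\<Sum>x\<in>S. \<Sum>y\<in>S. (w x * K x y) * g x * f y)"
    by (subst ip_sym) (rule ip_A_expand)
  also have "\<dots> = (\<Sum>y\<in>S. \<Sum>x\<in>S. (w y * K y x) * f y * g x)"
    by (subst sum.swap) (intro sum.cong refl, simp add: reversible mult_ac)
  finally show ?thesis by (simp add: ip_A_expand)
qed

text \<open>Sub-stochasticity bounds the Rayleigh quotient by 1 in absolute value:
  by \<open>|2ab| \<le> a\<^sup>2 + b\<^sup>2\<close> and reversibility,
  \<open>|\<Sum> w x K x y f x f y| \<le> \<Sum> w x K x y f x\<^sup>2 \<le> \<Sum> w x f x\<^sup>2\<close>.\<close>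
lemma A_rayleigh_bound: "\<bar>ip f (A f)\<bar> \<le> ip f f"
proof -
  define Q where "Q x y = w x * K x y" for x y
  have Q_nonneg: "x \<in> S \<Longrightarrow> y \<in> S \<Longrightarrow> Q x y \<ge> 0" for x y
    unfolding Q_def using w_pos K_nonneg by (simp add: less_imp_le)
  define D where "D = (\<Sum>x\<in>S. \<Sum>y\<in>S. Q x y * (f x)^2)"
  have D_le: "D \<le> ip f f"
  proof -
    have "D = (\<Sum>x\<in>S. w x * (f x)^2 * (\<Sum>y\<in>S. K x y))"
      unfolding D_def Q_def sum_distrib_left by (simp add: mult_ac)
    also have "\<dots> \<le> (\<Sum>x\<in>S. w x * (f x)^2 * 1)"
      by (intro sum_mono mult_left_mono K_row_sum) (auto intro!: mult_nonneg_nonneg less_imp_le[OF w_pos])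
    also have "\<dots> = ip f f" unfolding ip_def by (simp add: power2_eq_square mult_ac)
    finally show ?thesis .
  qed
  have D_swap: "(\<Sum>x\<in>S. \<Sum>y\<in>S. Q x y * (f y)^2) = D"
    unfolding D_def Q_def by (subst sum.swap) (intro sum.cong refl, simp add: reversible)
  have half_sum: "(\<Sum>x\<in>S. \<Sum>y\<in>S. Q x y * ((f x)^2 + (f y)^2) / 2) = D"
    using D_swap unfolding D_def
    by (simp add: distrib_left add_divide_distrib sum.distrib sum_divide_distrib[symmetric])
  have pointwise: "\<bar>Q x y * f x * f y\<bar> \<le> Q x y * ((f x)^2 + (f y)^2) / 2"
    if "x \<in> S" "y \<in> S" for x y
  proof -
    have "\<bar>f x * f y\<bar> \<le> ((f x)^2 + (f y)^2) / 2"
      using sum_squares_bound[of "\<bar>f x\<bar>" "\<bar>f y\<bar>"] by (simp add: abs_mult power2_eq_square)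
    from mult_left_mono[OF this Q_nonneg[OF that]] show ?thesis
      using Q_nonneg[OF that] by (simp add: abs_mult mult.assoc)
  qed
  have "\<bar>ip f (A f)\<bar> \<le> (\<Sum>x\<in>S. \<Sum>y\<in>S. \<bar>Q x y * f x * f y\<bar>)"
    unfolding ip_A_expand Q_def by (rule order_trans[OF sum_abs sum_mono[OF sum_abs]])
  also have "\<dots> \<le> D" unfolding half_sum[symmetric] by (intro sum_mono pointwise)
  finally show ?thesis using D_le by linarith
qed

definition orthonormal :: "('a \<Rightarrow> real) list \<Rightarrow> bool" where
  "orthonormal es \<longleftrightarrow>
     (\<forall>i<length es. \<forall>j<length es. ip (es!i) (es!j) = (if i = j then 1 else 0))"

lemma bessel:
  assumes "orthonormal es"
  shows "(\<Sum>i<length es. (ip f (es!i))^2) \<le> ip f f"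
proof -
  let ?n = "length es"
  define c where "c i = ip f (es!i)" for i
  define g where "g = (\<lambda>x. \<Sum>i<?n. c i * (es!i) x)"
  have fg: "ip f g = (\<Sum>i<?n. (c i)^2)"
    unfolding g_def ip_sum_right by (simp add: c_def power2_eq_square)
  have "ip g g = (\<Sum>i<?n. c i * (\<Sum>j<?n. c j * ip (es!i) (es!j)))"
    unfolding g_def ip_sum_left ip_sum_right ..
  also have "\<dots> = (\<Sum>i<?n. c i * (\<Sum>j<?n. c j * (if i = j then 1 else 0)))"
    using assms unfolding orthonormal_def by (intro sum.cong refl) auto
  also have "\<dots> = (\<Sum>i<?n. (c i)^2)"
    by (intro sum.cong refl) (simp add: if_distrib sum.delta power2_eq_square cong: if_cong)
  finally have gg: "ip g g = (\<Sum>i<?n. (c i)^2)" .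
  have "0 \<le> ip (\<lambda>x. f x - g x) (\<lambda>x. f x - g x)" by (rule ip_nonneg)
  then show ?thesis unfolding ip_diff_self fg gg c_def by simp
qed

text \<open>An orthonormal list has at most \<open>card S\<close> elements: summing Bessel's inequality
  for the coordinate functions over \<open>S\<close> bounds the sum of the squared norms.\<close>
lemma orthonormal_length_le:
  assumes "orthonormal es"
  shows "length es \<le> card S"
proof -
  let ?n = "length es"
  define \<delta> :: "'a \<Rightarrow> 'a \<Rightarrow> real" where "\<delta> x = (\<lambda>y. if y = x then 1 else 0)" for x
  have ip_\<delta>: "ip (\<delta> x) u = w x * u x" if x: "x \<in> S" for x u
  proof -
    have "ip (\<delta> x) u = (\<Sum>y\<in>S. if y = x then w x * u x else 0)"
      unfolding ip_def \<delta>_def by (intro sum.cong) auto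
    then show ?thesis using finite_S x by simp
  qed
  have coordinate: "(\<Sum>i<?n. w x * ((es!i) x)^2) \<le> 1" if x: "x \<in> S" for x
  proof -
    have "(\<Sum>i<?n. (w x * (es!i) x)^2) \<le> w x"
      using bessel[OF assms, of "\<delta> x"] ip_\<delta>[OF x] by (simp add: \<delta>_def)
    then have "w x * (\<Sum>i<?n. w x * ((es!i) x)^2) \<le> w x * 1"
      by (simp add: sum_distrib_left power2_eq_square mult_ac)
    then show ?thesis using w_pos[OF x] by (simp add: mult_le_cancel_left)
  qed
  have "real ?n = (\<Sum>i<?n. ip (es!i) (es!i))"
    using assms unfolding orthonormal_def by simp
  also have "\<dots> = (\<Sum>x\<in>S. \<Sum>i<?n. w x * ((es!i) x)^2)"
    unfolding ip_def by (subst sum.swap) (simp add: power2_eq_square mult_ac)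
  also have "\<dots> \<le> (\<Sum>x\<in>S. 1)" by (intro sum_mono coordinate)
  finally show ?thesis by simp
qed

definition eigen_system :: "('a \<Rightarrow> real) list \<Rightarrow> bool" where
  "eigen_system es \<longleftrightarrow>
     orthonormal es \<and> (\<forall>e\<in>set es. e \<in> supported \<and> (\<exists>l. A e = (\<lambda>x. l * e x)))"

definition orth :: "('a \<Rightarrow> real) list \<Rightarrow> ('a \<Rightarrow> real) set" where
  "orth es = {f\<in>supported. \<forall>e\<in>set es. ip e f = 0}"

lemma orth_lincomb: "f \<in> orth es \<Longrightarrow> g \<in> orth es \<Longrightarrow> (\<lambda>x. a * f x + g x) \<in> orth es"
  unfolding orth_def supported_def by (auto simp: ip_lincomb_right)

lemma orth_scale: "f \<in> orth es \<Longrightarrow> (\<lambda>x. a * f x) \<in> orth es"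
  unfolding orth_def supported_def by (auto simp: ip_scale_right)

lemma orth_A:
  assumes "eigen_system es" "f \<in> orth es"
  shows "A f \<in> orth es"
  unfolding orth_def
proof (intro CollectI conjI ballI A_supported)
  fix e assume e: "e \<in> set es"
  then obtain l where l: "A e = (\<lambda>x. l * e x)"
    using assms(1) by (auto simp: eigen_system_def)
  have "ip e (A f) = l * ip e f" unfolding A_self_adjoint l ip_scale_left ..
  then show "ip e (A f) = 0" using assms(2) e by (simp add: orth_def)
qed

lemma orth_A_power: "eigen_system es \<Longrightarrow> f \<in> orth es \<Longrightarrow> (A ^^ n) f \<in> orth es"
  by (induction n) (auto intro: orth_A)

lemma normalise:
  assumes "ip f f > 0"
  defines "g \<equiv> (\<lambda>x. (1 / sqrt (ip f f)) * f x)"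
  shows "ip g g = 1" and "ip g (A g) = ip f (A f) / ip f f"
  using assms unfolding g_def A_scale ip_scale_left ip_scale_right
  by (simp_all add: field_simps real_sqrt_mult_self)

lemma unit_sphere_compact: "compact {f\<in>orth es. ip f f = 1}"
proof -
  define B where "B = 1 + (\<Sum>x\<in>S. 1 / w x)"
  define T where "T x = (if x \<in> S then {-B..B} else {0::real})" for x
  have "0 \<le> (\<Sum>x\<in>S. 1 / w x)" by (intro sum_nonneg) (simp add: less_imp_le w_pos)
  then have B_ge_1: "1 \<le> B" unfolding B_def by linarith
  have in_box: "f x \<in> T x" if "ip f f = 1" "f \<in> supported" for f x
  proof (cases "x \<in> S")
    case True
    have "w x * f x * f x \<le> 1" using weighted_square_le_ip[OF True, of f] that by simp
    then have "(f x)^2 \<le> 1 / w x" using w_pos[OF True] by (simp add: field_simps power2_eq_square)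
    also have "1 / w x \<le> (\<Sum>x\<in>S. 1 / w x)"
      by (rule member_le_sum) (use True finite_S w_pos in \<open>auto intro: less_imp_le\<close>)
    also have "\<dots> \<le> B" by (simp add: B_def)
    also have "B \<le> B^2" using B_ge_1 by (simp add: power2_eq_square)
    finally have "\<bar>f x\<bar> \<le> \<bar>B\<bar>" by (simp add: abs_le_square_iff)
    then show ?thesis using True B_ge_1 by (simp add: T_def abs_le_iff)
  qed (use that in \<open>auto simp: supported_def T_def\<close>)
  have "{f\<in>orth es. ip f f = 1} = Pi UNIV T \<inter> ({f. ip f f = 1} \<inter> (\<Inter>e\<in>set es. {f. ip e f = 0}))"
  proof (intro equalityI subsetI)
    fix f assume "f \<in> {f\<in>orth es. ip f f = 1}"
    then show "f \<in> Pi UNIV T \<inter> ({f. ip f f = 1} \<inter> (\<Inter>e\<in>set es. {f. ip e f = 0}))"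
      using in_box by (auto simp: orth_def)
  next
    fix f assume f: "f \<in> Pi UNIV T \<inter> ({f. ip f f = 1} \<inter> (\<Inter>e\<in>set es. {f. ip e f = 0}))"
    then have fT: "f x \<in> T x" for x by auto
    have "f x = 0" if "x \<notin> S" for x using fT[of x] that by (simp add: T_def)
    then have "f \<in> supported" by (simp add: supported_def)
    then show "f \<in> {f\<in>orth es. ip f f = 1}" using f by (auto simp: orth_def)
  qed
  also have "compact \<dots>"
  proof (rule compact_Int_closed)
    show "compact (Pi UNIV T)" by (rule compact_Pi_UNIV) (simp add: T_def)
    show "closed ({f. ip f f = 1} \<inter> (\<Inter>e\<in>set es. {f. ip e f = 0}))"
      unfolding ip_def by (intro closed_Int closed_INT ballI closed_Collect_eq continuous_intros)
  qed
  finally show ?thesis .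
qed

lemma rayleigh_maximiser:
  assumes "h \<in> orth es" "ip h h \<noteq> 0"
  obtains e where "e \<in> orth es" "ip e e = 1" "\<And>f. f \<in> orth es \<Longrightarrow> ip f (A f) \<le> ip e (A e) * ip f f"
proof -
  let ?sphere = "{f\<in>orth es. ip f f = 1}"
  have unit: "(\<lambda>x. (1 / sqrt (ip f f)) * f x) \<in> ?sphere" if "f \<in> orth es" "ip f f > 0" for f
  proof -
    have "(\<lambda>x. (1 / sqrt (ip f f)) * f x) \<in> orth es" by (rule orth_scale[OF that(1)])
    then show ?thesis using normalise(1)[OF that(2)] by simp
  qed
  have "ip h h > 0" using assms(2) ip_nonneg[of h] by simp
  then have "?sphere \<noteq> {}" using unit[OF assms(1)] by blast
  moreover have "continuous_on ?sphere (\<lambda>f. ip f (A f))"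
    unfolding ip_A_expand by (intro continuous_intros)
  ultimately obtain e where e: "e \<in> ?sphere" and e_max: "\<And>f. f \<in> ?sphere \<Longrightarrow> ip f (A f) \<le> ip e (A e)"
    using continuous_attains_sup[OF unit_sphere_compact] by blast
  have "ip f (A f) \<le> ip e (A e) * ip f f" if f: "f \<in> orth es" for f
  proof (cases "ip f f = 0")
    case True
    then have "f = (\<lambda>x. 0)" using f ip_self_eq_0 by (auto simp: orth_def)
    then show ?thesis by (simp add: ip_def)
  next
    case False
    then have pos: "ip f f > 0" using ip_nonneg[of f] by simp
    have "ip f (A f) / ip f f \<le> ip e (A e)"
      using e_max[OF unit[OF f pos]] normalise[OF pos] by simp
    then show ?thesis using pos by (simp add: field_simps)
  qed
  with e that show ?thesis by blast
qed

text \<open>Perturbing \<open>e\<close> in the direction \<open>y = A e - l e\<close> gives a quadratic in \<open>t\<close> that is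
  nonpositive everywhere with linear coefficient \<open>2 \<langle>y, y\<rangle>\<close>, forcing \<open>y = 0\<close>.\<close>
lemma rayleigh_maximiser_eigenvector:
  assumes sys: "eigen_system es" and e: "e \<in> orth es" "ip e e = 1"
    and max: "\<And>f. f \<in> orth es \<Longrightarrow> ip f (A f) \<le> ip e (A e) * ip f f"
  shows "A e = (\<lambda>x. ip e (A e) * e x)"
proof -
  define l where "l = ip e (A e)"
  define y where "y = (\<lambda>x. (-l) * e x + A e x)"
  have y_orth: "y \<in> orth es" unfolding y_def by (rule orth_lincomb[OF e(1) orth_A[OF sys e(1)]])
  have "ip y y = (-l) * ip y e + ip y (A e)"
    by (subst (2) y_def, rule ip_lincomb_right)
  then have yy: "ip y y = ip y (A e) - l * ip y e" by simp
  have "2*t*ip y y + t^2 * (ip y (A y) - l * ip y y) \<le> 0" for t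
  proof -
    have Ae_y: "ip e (A y) = ip y (A e)" using A_self_adjoint ip_sym by metis
    have rayleigh: "ip (\<lambda>x. t * y x + e x) (A (\<lambda>x. t * y x + e x))
        = t^2 * ip y (A y) + 2*t*ip y (A e) + l"
      unfolding A_lincomb ip_lincomb_left ip_lincomb_right Ae_y l_def
      by (simp add: algebra_simps power2_eq_square)
    have norm: "ip (\<lambda>x. t * y x + e x) (\<lambda>x. t * y x + e x) = t^2 * ip y y + 2*t*ip y e + 1"
      unfolding ip_lincomb_left ip_lincomb_right using ip_sym[of e y] e(2)
      by (simp add: algebra_simps power2_eq_square)
    have "t^2 * ip y (A y) + 2*t*ip y (A e) + l \<le> l * (t^2 * ip y y + 2*t*ip y e + 1)"
      using max[OF orth_lincomb[OF y_orth e(1), of t]] unfolding rayleigh norm l_def[symmetric] .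
    then show ?thesis unfolding yy by (simp add: algebra_simps)
  qed
  then have "ip y y = 0" by (rule nonneg_eq_0_if_quadratic_nonpos[OF _ ip_nonneg])
  then have y0: "y = (\<lambda>x. 0)" using y_orth ip_self_eq_0 by (auto simp: orth_def)
  have "A e x = l * e x" for x using fun_cong[OF y0, of x] by (simp add: y_def)
  then show ?thesis by (auto simp: l_def)
qed

lemma eigen_system_Cons:
  assumes sys: "eigen_system es" and e: "e \<in> orth es" "ip e e = 1" and Ae: "A e = (\<lambda>x. l * e x)"
  shows "eigen_system (e # es)"
proof -
  have on: "orthonormal es" using sys by (simp add: eigen_system_def)
  have e_orth: "ip e (es!i) = 0" "ip (es!i) e = 0" if "i < length es" for i
    using e(1) that ip_sym[of e "es!i"] by (auto simp: orth_def)
  have "orthonormal (e # es)"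
    unfolding orthonormal_def
  proof (intro allI impI)
    fix i j assume i: "i < length (e # es)" and j: "j < length (e # es)"
    show "ip ((e # es)!i) ((e # es)!j) = (if i = j then 1 else 0)"
      using on e(2) e_orth i j unfolding orthonormal_def
      by (cases i; cases j) auto
  qed
  then show ?thesis using sys e(1) Ae by (auto simp: eigen_system_def orth_def)
qed

lemma moments_split:
  assumes sys: "eigen_system (e # es)" and Ae: "A e = (\<lambda>x. l * e x)" and ee: "ip e e = 1"
    and h': "h' \<in> orth (e # es)"
  shows "ip (\<lambda>x. \<alpha> * e x + h' x) ((A^^n) (\<lambda>x. \<alpha> * e x + h' x))
         = \<alpha>^2 * l^n + ip h' ((A^^n) h')"
proof -
  have power: "(A^^n) (\<lambda>x. \<alpha> * e x + h' x) = (\<lambda>x. (\<alpha> * l^n) * e x + (A^^n) h' x)"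
  proof (induction n)
    case (Suc n)
    have "(A^^Suc n) (\<lambda>x. \<alpha> * e x + h' x) = A (\<lambda>x. (\<alpha> * l^n) * e x + (A^^n) h' x)"
      using Suc by simp
    also have "\<dots> = (\<lambda>x. (\<alpha> * l^n) * A e x + A ((A^^n) h') x)" by (rule A_lincomb)
    finally show ?case unfolding Ae by (simp add: mult_ac)
  qed simp
  have "ip e ((A^^n) h') = 0" using orth_A_power[OF sys h'] by (simp add: orth_def)
  moreover have "ip h' e = 0" using h' ip_sym[of h' e] by (simp add: orth_def)
  ultimately show ?thesis
    unfolding power ip_lincomb_left ip_lincomb_right using ee by (simp add: power2_eq_square)
qed

text \<open>The induction splits off one eigenvector at a time;
  it terminates because orthonormal lists have length at most \<open>card S\<close>.\<close>
lemma spectral_moments_orth: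
  assumes "eigen_system es" "h \<in> orth es"
  shows "\<exists>xs. atoms_in_interval xs \<and> (\<forall>n. ip h ((A^^n) h) = atom_sum xs (\<lambda>x. x^n))"
  using assms
proof (induction "card S - length es" arbitrary: es h rule: less_induct)
  case less
  note sys = less.prems(1) and h = less.prems(2)
  show ?case
  proof (cases "ip h h = 0")
    case True
    then have "h = (\<lambda>x. 0)" using h ip_self_eq_0 by (auto simp: orth_def)
    then show ?thesis by (intro exI[of _ "[]"]) (simp add: ip_def)
  next
    case False
    obtain e where e: "e \<in> orth es" "ip e e = 1"
      and max: "\<And>f. f \<in> orth es \<Longrightarrow> ip f (A f) \<le> ip e (A e) * ip f f"
      using rayleigh_maximiser[OF h False] by blast
    define l where "l = ip e (A e)"
    have Ae: "A e = (\<lambda>x. l * e x)"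
      unfolding l_def by (rule rayleigh_maximiser_eigenvector[OF sys e max])
    have l: "l \<in> {-1..1}" using A_rayleigh_bound[of e] e(2) by (simp add: l_def abs_le_iff)
    have sys': "eigen_system (e # es)" by (rule eigen_system_Cons[OF sys e Ae])
    have "length (e # es) \<le> card S"
      using sys' by (intro orthonormal_length_le) (simp add: eigen_system_def)
    then have smaller: "card S - length (e # es) < card S - length es" by simp
    define \<alpha> where "\<alpha> = ip e h"
    define h' where "h' = (\<lambda>x. (-\<alpha>) * e x + h x)"
    have "h' \<in> orth es" unfolding h'_def by (rule orth_lincomb[OF e(1) h])
    moreover have "ip e h' = 0" unfolding h'_def ip_lincomb_right e(2) \<alpha>_def by simp
    ultimately have h': "h' \<in> orth (e # es)" by (simp add: orth_def)
    obtain xs where xs: "atoms_in_interval xs" "\<forall>n. ip h' ((A^^n) h') = atom_sum xs (\<lambda>x. x^n)"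
      using less.hyps[OF smaller sys' h'] by blast
    have h_split: "h = (\<lambda>x. \<alpha> * e x + h' x)" unfolding h'_def by simp
    show ?thesis
      using xs l moments_split[OF sys' Ae e(2) h', of \<alpha>]
      by (intro exI[of _ "(l, \<alpha>^2) # xs"]) (simp add: h_split[symmetric])
  qed
qed

corollary spectral_moments:
  assumes "h \<in> supported"
  shows "\<exists>xs. atoms_in_interval xs \<and> (\<forall>n. ip h ((A^^n) h) = atom_sum xs (\<lambda>x. x^n))"
  using assms by (intro spectral_moments_orth[of "[]"]) (simp_all add: eigen_system_def orthonormal_def orth_def)

end

lemma atom_sum_const_1: "atom_sum xs (\<lambda>_. 1) = sum_list (map snd xs)"
  by (induction xs) auto

lemma integral_pmf_of_list:
  assumes wf: "pmf_of_list_wf xs"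
  shows "integral\<^sup>L (measure_pmf (pmf_of_list xs)) f = atom_sum xs f"
proof -
  have regroup: "(\<Sum>a\<in>A. sum_list (map snd (filter (\<lambda>z. fst z = a) ys)) * f a) = atom_sum ys f"
    if "finite A" "fst ` set ys \<subseteq> A" for A and ys :: "(real \<times> real) list"
    using that(2)
  proof (induction ys)
    case (Cons xp ys)
    obtain x p where xp: "xp = (x,p)" by (cases xp)
    have "x \<in> A" using Cons.prems xp by auto
    have "(\<Sum>a\<in>A. sum_list (map snd (filter (\<lambda>z. fst z = a) (xp # ys))) * f a) =
          (\<Sum>a\<in>A. (if x = a then p * f a else 0) + sum_list (map snd (filter (\<lambda>z. fst z = a) ys)) * f a)"
      by (intro sum.cong refl) (auto simp: xp algebra_simps)
    also have "\<dots> = p * f x + atom_sum ys f"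
      using Cons \<open>x \<in> A\<close> that(1) by (simp add: sum.distrib)
    finally show ?case by (simp add: xp)
  qed simp
  have "integral\<^sup>L (measure_pmf (pmf_of_list xs)) f
        = (\<Sum>a\<in>fst ` set xs. pmf (pmf_of_list xs) a *\<^sub>R f a)"
    by (rule integral_measure_pmf) (use set_pmf_of_list[OF wf] in auto)
  also have "\<dots> = (\<Sum>a\<in>fst ` set xs. sum_list (map snd (filter (\<lambda>z. fst z = a) xs)) * f a)"
    by (simp add: pmf_pmf_of_list[OF wf])
  also have "\<dots> = atom_sum xs f" by (rule regroup) auto
  finally show ?thesis .
qed

definition atom_distr :: "(real \<times> real) list \<Rightarrow> real measure" where
  "atom_distr xs = distr (measure_pmf (pmf_of_list xs)) borel (\<lambda>x. x)"

lemma atom_distr: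
  assumes atoms: "atoms_in_interval xs" and mass: "atom_sum xs (\<lambda>_. 1) = 1"
  shows "real_distribution (atom_distr xs)"
    and "AE x in atom_distr xs. x \<in> {-1..1}"
    and "f \<in> borel_measurable borel \<Longrightarrow> integral\<^sup>L (atom_distr xs) f = atom_sum xs f"
proof -
  have wf: "pmf_of_list_wf xs"
    using atoms mass by (auto simp: pmf_of_list_wf_def atom_sum_const_1 atoms_in_interval_def)
  show "real_distribution (atom_distr xs)"
    unfolding atom_distr_def by (rule prob_space.real_distribution_distr[OF prob_space_measure_pmf]) simp
  have "set_pmf (pmf_of_list xs) \<subseteq> {-1..1}"
  proof
    fix x assume "x \<in> set_pmf (pmf_of_list xs)"
    then have "x \<in> fst ` set xs" using set_pmf_of_list[OF wf] by auto
    then obtain p where "(x,p) \<in> set xs" by force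
    then show "x \<in> {-1..1}" using atoms by (auto simp: atoms_in_interval_def)
  qed
  then show "AE x in atom_distr xs. x \<in> {-1..1}"
    unfolding atom_distr_def by (subst AE_distr_iff) (auto simp: AE_measure_pmf_iff)
  show "integral\<^sup>L (atom_distr xs) f = atom_sum xs f" if "f \<in> borel_measurable borel"
    unfolding atom_distr_def using that by (simp add: integral_distr integral_pmf_of_list[OF wf])
qed

lemma tight_if_in_interval:
  assumes "\<And>n. real_distribution (\<nu> n)" "\<And>n. AE x in \<nu> n. x \<in> {-1..1::real}"
  shows "tight \<nu>"
  unfolding tight_def
proof (intro conjI allI impI assms)
  fix \<epsilon> :: real assume "\<epsilon> > 0"
  have "measure (\<nu> n) {-2<..1} = 1" for n
  proof -
    interpret real_distribution "\<nu> n" by (rule assms)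
    show ?thesis using assms(2)[of n] by (subst prob_eq_1) (auto elim: eventually_mono)
  qed
  then show "\<exists>a b. a < b \<and> (\<forall>n. 1 - \<epsilon> < measure (\<nu> n) {a<..b})"
    using \<open>\<epsilon> > 0\<close> by (intro exI[of _ "-2"] exI[of _ 1]) auto
qed

definition clamp :: "real \<Rightarrow> real" where "clamp x = max (-1) (min 1 x)"

definition outside :: "real \<Rightarrow> real" where "outside x = min 1 (max 0 (\<bar>x\<bar> - 1))"

lemma clamp_measurable [measurable]: "clamp \<in> borel_measurable borel"
  unfolding clamp_def by measurable

lemma outside_measurable [measurable]: "outside \<in> borel_measurable borel"
  unfolding outside_def by measurable

lemma clamp_id: "x \<in> {-1..1} \<Longrightarrow> clamp x = x"
  unfolding clamp_def by simp

lemma isCont_clamp: "isCont clamp x"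
  unfolding clamp_def by (intro continuous_intros)

lemma isCont_outside: "isCont outside x"
  unfolding outside_def by (intro continuous_intros)

context
  fixes \<nu> :: "nat \<Rightarrow> real measure" and M :: "real measure"
  assumes distr: "\<And>n. real_distribution (\<nu> n)" and M: "real_distribution M"
    and in_interval: "\<And>n. AE x in \<nu> n. x \<in> {-1..1}"
    and weak_conv: "weak_conv_m \<nu> M"
begin

lemma weak_limit_integral:
  fixes f :: "real \<Rightarrow> real"
  assumes "\<And>x. isCont f x" "\<And>x. \<bar>f x\<bar> \<le> 1"
  shows "(\<lambda>n. integral\<^sup>L (\<nu> n) f) \<longlonglongrightarrow> integral\<^sup>L M f"
  by (rule weak_conv_imp_integral_bdd_continuous_conv[OF distr M weak_conv, of f 1]) (simp_all add: assms)

text \<open>A weak limit of distributions on \<open>[-1,1]\<close> lives on \<open>[-1,1]\<close>: the integral of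
  \<open>outside\<close> vanishes along the sequence, hence in the limit.\<close>
lemma weak_limit_in_interval: "AE x in M. x \<in> {-1..1}"
proof -
  interpret M: real_distribution M by (rule M)
  have "integral\<^sup>L (\<nu> n) outside = 0" for n
    using in_interval[of n] by (intro integral_eq_zero_AE) (auto simp: outside_def elim: eventually_mono)
  moreover have "(\<lambda>n. integral\<^sup>L (\<nu> n) outside) \<longlonglongrightarrow> integral\<^sup>L M outside"
    by (rule weak_limit_integral[OF isCont_outside]) (simp add: outside_def)
  ultimately have "integral\<^sup>L M outside = 0" by (simp add: LIMSEQ_const_iff)
  moreover have "integrable M outside"
    by (rule M.integrable_const_bound[where B=1]) (auto simp: outside_def)
  ultimately have "AE x in M. outside x = 0"
    using integral_nonneg_eq_0_iff_AE[of M outside] by (auto simp: outside_def)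
  then show ?thesis by (rule eventually_mono) (auto simp: outside_def)
qed

text \<open>Moments converge along the sequence, since on \<open>[-1,1]\<close> the power \<open>x\<^sup>k\<close>
  coincides with the bounded continuous function \<open>clamp x ^ k\<close>.\<close>
lemma weak_limit_moments: "(\<lambda>n. integral\<^sup>L (\<nu> n) (\<lambda>x. x^k)) \<longlonglongrightarrow> integral\<^sup>L M (\<lambda>x. x^k)"
proof -
  have clamp_eq: "integral\<^sup>L N (\<lambda>x. x^k) = integral\<^sup>L N (\<lambda>x. clamp x ^ k)"
    if "AE x in N. x \<in> {-1..1}" "sets N = sets borel" for N :: "real measure"
  proof (rule integral_cong_AE)
    show "AE x in N. x^k = clamp x ^ k" using that(1) by (rule eventually_mono) (simp add: clamp_id)
    have meas: "measurable N borel = borel_measurable borel"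
      by (rule measurable_cong_sets[OF that(2) refl])
    show "(\<lambda>x. x^k) \<in> borel_measurable N" unfolding meas by measurable
    show "(\<lambda>x. clamp x ^ k) \<in> borel_measurable N" unfolding meas by measurable
  qed
  have "(\<lambda>n. integral\<^sup>L (\<nu> n) (\<lambda>x. clamp x ^ k)) \<longlonglongrightarrow> integral\<^sup>L M (\<lambda>x. clamp x ^ k)"
  proof (rule weak_limit_integral)
    fix x show "isCont (\<lambda>x. clamp x ^ k) x" by (intro continuous_intros isCont_clamp)
    show "\<bar>clamp x ^ k\<bar> \<le> 1" by (simp add: clamp_def power_abs power_le_one)
  qed
  moreover have "integral\<^sup>L (\<nu> n) (\<lambda>x. x^k) = integral\<^sup>L (\<nu> n) (\<lambda>x. clamp x ^ k)" for n
    by (rule clamp_eq[OF in_interval real_distribution.events_eq_borel[OF distr]])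
  moreover have "integral\<^sup>L M (\<lambda>x. x^k) = integral\<^sup>L M (\<lambda>x. clamp x ^ k)"
    by (rule clamp_eq[OF weak_limit_in_interval real_distribution.events_eq_borel[OF M]])
  ultimately show ?thesis by simp
qed

end

text \<open>Helly's selection theorem applied to atomic distributions on \<open>[-1,1]\<close> whose first
  \<open>N\<close> moments are prescribed: a weak limit point has all the prescribed moments.\<close>
lemma limit_of_atomic_distributions:
  assumes atoms: "\<And>N. atoms_in_interval (ys N)" and mass: "\<And>N. atom_sum (ys N) (\<lambda>_. 1) = 1"
    and moments: "\<And>N n. n \<le> N \<Longrightarrow> atom_sum (ys N) (\<lambda>x. x^n) = a n"
  shows "\<exists>M. real_distribution M \<and> (AE x in M. x \<in> {-1..1}) \<and> (\<forall>n. integral\<^sup>L M (\<lambda>x. x^n) = a n)"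
proof -
  define \<nu> where "\<nu> N = atom_distr (ys N)" for N
  note \<nu> = atom_distr[OF atoms mass, folded \<nu>_def]
  have "tight \<nu>" by (rule tight_if_in_interval[OF \<nu>(1,2)])
  then obtain r M where r: "strict_mono r" and M: "real_distribution M"
    and conv: "weak_conv_m (\<nu> \<circ> r) M"
    using tight_imp_convergent_subsubsequence[of \<nu> id] by (auto simp: strict_mono_def)
  have M_interval: "AE x in M. x \<in> {-1..1}"
    by (rule weak_limit_in_interval[OF _ M _ conv]) (simp_all only: o_apply \<nu>)
  have \<nu>_moment: "integral\<^sup>L (\<nu> N) (\<lambda>x. x^k) = atom_sum (ys N) (\<lambda>x. x^k)" for N k
    by (rule \<nu>(3)) measurable
  have "integral\<^sup>L M (\<lambda>x. x^k) = a k" for k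
  proof -
    have "\<forall>\<^sub>F n in sequentially. a k = integral\<^sup>L (\<nu> (r n)) (\<lambda>x. x^k)"
    proof (rule eventually_sequentiallyI[of k])
      fix n assume "k \<le> n"
      then have "k \<le> r n" using seq_suble[OF r, of n] by simp
      then show "a k = integral\<^sup>L (\<nu> (r n)) (\<lambda>x. x^k)" by (simp add: \<nu>_moment moments)
    qed
    then have "(\<lambda>n. integral\<^sup>L (\<nu> (r n)) (\<lambda>x. x^k)) \<longlonglongrightarrow> a k"
      by (rule Lim_transform_eventually[OF tendsto_const])
    moreover have "(\<lambda>n. integral\<^sup>L (\<nu> (r n)) (\<lambda>x. x^k)) \<longlonglongrightarrow> integral\<^sup>L M (\<lambda>x. x^k)"
      using weak_limit_moments[OF _ M _ conv] by (simp only: o_apply \<nu>)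
    ultimately show ?thesis by (rule LIMSEQ_unique[rotated])
  qed
  then show ?thesis using M M_interval by blast
qed

lemma distribution_from_moments:
  fixes m :: "nat \<Rightarrow> real"
  assumes approx: "\<And>N. \<exists>xs. atoms_in_interval xs \<and> (\<forall>n\<le>N. m n = atom_sum xs (\<lambda>x. x^n))"
  shows "\<exists>c M. 0 \<le> c \<and> real_distribution M \<and> (AE x in M. x \<in> {-1..1}) \<and>
           (\<forall>n. m n = c * integral\<^sup>L M (\<lambda>x. x^n))"
proof -
  obtain xs where atoms: "\<And>N. atoms_in_interval (xs N)"
    and xs_moments: "\<And>N n. n \<le> N \<Longrightarrow> m n = atom_sum (xs N) (\<lambda>x. x^n)"
    using approx by metis
  have mass: "atom_sum (xs N) (\<lambda>_. 1) = m 0" for N using xs_moments[of 0 N] by simp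
  show ?thesis
  proof (cases "m 0 = 0")
    case True
    then have "m n = 0" for n
      using atom_sum_moment_bound[OF atoms, of n n] mass[of n] xs_moments[of n n] by simp
    moreover have "real_distribution (atom_distr [(0,1)])" by (rule atom_distr(1)) simp_all
    moreover have "AE x in atom_distr [(0,1)]. x \<in> {-1..1}" by (rule atom_distr(2)) simp_all
    ultimately show ?thesis by (intro exI[of _ 0] exI[of _ "atom_distr [(0,1)]"]) simp
  next
    case False
    then have pos: "m 0 > 0" using atom_sum_nonneg[OF atoms, of "\<lambda>_. 1" 0] mass[of 0] by simp
    define ys where "ys N = map (\<lambda>(x,p). (x, p / m 0)) (xs N)" for N
    have "\<exists>M. real_distribution M \<and> (AE x in M. x \<in> {-1..1}) \<and>
              (\<forall>n. integral\<^sup>L M (\<lambda>x. x^n) = m n / m 0)"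
    proof (rule limit_of_atomic_distributions)
      show "atoms_in_interval (ys N)" for N
        unfolding ys_def using atoms pos by (simp add: atoms_in_interval_rescale)
      show "atom_sum (ys N) (\<lambda>_. 1) = 1" for N
        unfolding ys_def atom_sum_rescale mass using pos by simp
      show "atom_sum (ys N) (\<lambda>x. x^n) = m n / m 0" if "n \<le> N" for N n
        unfolding ys_def atom_sum_rescale xs_moments[OF that] ..
    qed
    then obtain M where "real_distribution M" "AE x in M. x \<in> {-1..1}"
      "\<And>n. integral\<^sup>L M (\<lambda>x. x^n) = m n / m 0" by blast
    then show ?thesis using pos by (intro exI[of _ "m 0"] exI[of _ M]) simp
  qed
qed

lemma scaled_distribution:
  assumes M: "real_distribution M" and M_interval: "AE x in M. x \<in> {-1..1}" and c: "0 \<le> c"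
  defines "\<mu> \<equiv> density M (\<lambda>_. ennreal c)"
  shows "sets \<mu> = sets borel" and "finite_measure \<mu>" and "emeasure \<mu> (- {-1..1}) = 0"
    and "(LINT x:{-1..1}|\<mu>. x^n) = c * integral\<^sup>L M (\<lambda>x. x^n)"
proof -
  interpret M: real_distribution M by (rule M)
  have space: "space M = UNIV" using M.events_eq_borel sets_eq_imp_space_eq by fastforce
  show "sets \<mu> = sets borel" by (simp add: \<mu>_def)
  have "emeasure \<mu> (space \<mu>) = ennreal c"
    unfolding \<mu>_def using M.emeasure_space_1 space by (simp add: emeasure_density_const)
  then show "finite_measure \<mu>" by (intro finite_measureI) simp
  have "emeasure M (- {-1..1}) = 0"
  proof -
    have events: "- {-1..1} \<in> sets M" by simp
    have "{x\<in>space M. \<not> x \<in> {-1..1::real}} = - {-1..1}" using space by auto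
    from AE_iff_measurable[OF events this] show ?thesis using M_interval by simp
  qed
  then show "emeasure \<mu> (- {-1..1}) = 0"
    unfolding \<mu>_def by (subst emeasure_density_const) auto
  have "(LINT x:{-1..1}|\<mu>. x^n) = integral\<^sup>L M (\<lambda>x. c * (indicator {-1..1} x * x^n))"
    unfolding \<mu>_def set_lebesgue_integral_def using c by (subst integral_density) auto
  also have "\<dots> = integral\<^sup>L M (\<lambda>x. c * x^n)"
  proof (rule integral_cong_AE)
    show "AE x in M. c * (indicator {-1..1} x * x^n) = c * x^n"
      using M_interval by (rule eventually_mono) simp
  qed simp_all
  also have "\<dots> = c * integral\<^sup>L M (\<lambda>x. x^n)" by simp
  finally show "(LINT x:{-1..1}|\<mu>. x^n) = c * integral\<^sup>L M (\<lambda>x. x^n)" .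
qed

lemma measure_from_moments:
  fixes m :: "nat \<Rightarrow> real"
  assumes "\<And>N. \<exists>xs. atoms_in_interval xs \<and> (\<forall>n\<le>N. m n = atom_sum xs (\<lambda>x. x^n))"
  shows "\<exists>\<mu> :: real measure. sets \<mu> = sets borel \<and> finite_measure \<mu> \<and>
           emeasure \<mu> (- {-1..1}) = 0 \<and> (\<forall>n. m n = (LINT x:{-1..1}|\<mu>. x^n))"
proof -
  obtain c M where c: "0 \<le> c" and M: "real_distribution M" "AE x in M. x \<in> {-1..1}"
    and m: "\<And>n. m n = c * integral\<^sup>L M (\<lambda>x. x^n)"
    using distribution_from_moments[OF assms] by blast
  show ?thesis using scaled_distribution[OF M c] m by metis
qed

lemma not_nbr_srw_step: "y \<notin> nbrs E x \<Longrightarrow> srw_step E x y = 0"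
  by (simp add: nbrs_def srw_step_def)

lemma deg_pos_if_nbr: "finite (nbrs E x) \<Longrightarrow> y \<in> nbrs E x \<Longrightarrow> deg E x > 0"
  unfolding deg_def nbrs_def by (subst sum_pos2) auto

context
  fixes E :: "'a \<Rightarrow> 'a \<Rightarrow> nat" and v :: 'a
begin

text \<open>\<open>first_hit n x\<close> is the probability that the walk started at \<open>x\<close> visits \<open>v\<close> for the
  first time at time \<open>n\<close> (time 0 included).\<close>
fun first_hit :: "nat \<Rightarrow> 'a \<Rightarrow> real" where
  "first_hit 0 x = (if x = v then 1 else 0)"
| "first_hit (Suc n) x = (if x = v then 0 else (\<Sum>y\<in>nbrs E x. srw_step E x y * first_hit n y))"

definition hit_paths :: "nat \<Rightarrow> 'a \<Rightarrow> 'a list set" where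
  "hit_paths n x = {q. length q = Suc n \<and> q!0 = x \<and> q!n = v \<and> (\<forall>i<n. q!i \<noteq> v) \<and>
                       (\<forall>i<n. E (q!i) (q!Suc i) > 0)}"

definition step_paths :: "nat \<Rightarrow> 'a \<Rightarrow> 'a list set" where
  "step_paths n x = {p. length p = Suc (Suc n) \<and> p!0 = x \<and> p!(Suc n) = v \<and> (\<forall>j<n. p!(Suc j) \<noteq> v) \<and>
                        (\<forall>i<Suc n. E (p!i) (p!Suc i) > 0)}"

definition path_weight :: "nat \<Rightarrow> 'a list \<Rightarrow> real" where
  "path_weight n q = (\<Prod>i<n. srw_step E (q!i) (q!Suc i))"

lemma step_paths_eq: "step_paths n x = Cons x ` (\<Union>y\<in>nbrs E x. hit_paths n y)"
proof (rule set_eqI)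
  fix p show "p \<in> step_paths n x \<longleftrightarrow> p \<in> Cons x ` (\<Union>y\<in>nbrs E x. hit_paths n y)"
  proof (cases p)
    case (Cons a q)
    have "a # q \<in> step_paths n x \<longleftrightarrow> a = x \<and> q!0 \<in> nbrs E x \<and> q \<in> hit_paths n (q!0)"
      unfolding step_paths_def hit_paths_def nbrs_def by (auto simp: All_less_Suc2)
    moreover have "q \<in> hit_paths n y \<Longrightarrow> q!0 = y" for y by (simp add: hit_paths_def)
    ultimately show ?thesis unfolding Cons by blast
  qed (auto simp: step_paths_def)
qed

lemma hit_paths_0: "hit_paths 0 x = (if x = v then {[v]} else {})"
proof -
  have "length q = Suc 0 \<Longrightarrow> q = [q!0]" for q :: "'a list" by (cases q) auto
  then show ?thesis unfolding hit_paths_def by auto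
qed

lemma hit_paths_Suc: "hit_paths (Suc n) x = (if x = v then {} else step_paths n x)"
  unfolding hit_paths_def step_paths_def by (auto simp: All_less_Suc2)

lemma sum_step_paths:
  assumes "finite (nbrs E x)" and "\<And>y. finite (hit_paths n y)"
  shows "(\<Sum>p\<in>step_paths n x. path_weight (Suc n) p)
         = (\<Sum>y\<in>nbrs E x. srw_step E x y * (\<Sum>q\<in>hit_paths n y. path_weight n q))"
proof -
  have head: "\<And>q y. q \<in> hit_paths n y \<Longrightarrow> q!0 = y" by (simp add: hit_paths_def)
  have "(\<Sum>p\<in>step_paths n x. path_weight (Suc n) p)
        = (\<Sum>q\<in>(\<Union>y\<in>nbrs E x. hit_paths n y). path_weight (Suc n) (x # q))"
    unfolding step_paths_eq by (subst sum.reindex) (auto simp: inj_on_def)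
  also have "\<dots> = (\<Sum>y\<in>nbrs E x. (\<Sum>q\<in>hit_paths n y. path_weight (Suc n) (x # q)))"
    by (rule sum.UNION_disjoint) (use assms in \<open>auto dest: head\<close>)
  also have "\<dots> = (\<Sum>y\<in>nbrs E x. srw_step E x y * (\<Sum>q\<in>hit_paths n y. path_weight n q))"
    unfolding sum_distrib_left
    by (intro sum.cong refl) (simp only: path_weight_def prod.lessThan_Suc_shift, simp add: head)
  finally show ?thesis .
qed

text \<open>Balls around \<open>v\<close> in the graph metric, the ball with \<open>v\<close> removed, and on it the
  transition operator of the walk killed at \<open>v\<close>, the vector of one-step return
  probabilities, and the degree-weighted inner product.\<close>
fun graph_ball :: "nat \<Rightarrow> 'a set" where
  "graph_ball 0 = {v}"
| "graph_ball (Suc r) = graph_ball r \<union> (\<Union>x\<in>graph_ball r. nbrs E x)"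

definition punctured_ball :: "nat \<Rightarrow> 'a set" where
  "punctured_ball R = graph_ball R - {v}"

definition killed_op :: "nat \<Rightarrow> ('a \<Rightarrow> real) \<Rightarrow> 'a \<Rightarrow> real" where
  "killed_op R = reversible_kernel.A (punctured_ball R) (srw_step E)"

definition return_vector :: "nat \<Rightarrow> 'a \<Rightarrow> real" where
  "return_vector R x = (if x \<in> punctured_ball R then srw_step E x v else 0)"

definition deg_ip :: "nat \<Rightarrow> ('a \<Rightarrow> real) \<Rightarrow> ('a \<Rightarrow> real) \<Rightarrow> real" where
  "deg_ip R = reversible_kernel.ip (punctured_ball R) (\<lambda>x. real (deg E x))"

lemma graph_ball_mono: "d \<le> R \<Longrightarrow> graph_ball d \<subseteq> graph_ball R"
  by (induction R) (auto simp: le_Suc_eq)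

lemma nbrs_subset_graph_ball: "y \<in> graph_ball d \<Longrightarrow> nbrs E y \<subseteq> graph_ball (Suc d)"
  by auto

context
  assumes finite_nbrs: "\<And>x. finite (nbrs E x)" and symmetric: "\<And>x y. E x y = E y x"
begin

lemma first_hit_paths: "finite (hit_paths n x) \<and> first_hit n x = (\<Sum>q\<in>hit_paths n x. path_weight n q)"
proof (induction n arbitrary: x)
  case 0 then show ?case by (simp add: hit_paths_0 path_weight_def)
next
  case (Suc n)
  have "finite (step_paths n y)" for y unfolding step_paths_eq using Suc finite_nbrs by auto
  then show ?case using sum_step_paths[OF finite_nbrs] Suc by (auto simp: hit_paths_Suc)
qed

lemma first_return_prob_first_hit:
  "first_return_prob E v (Suc n) = (\<Sum>y\<in>nbrs E v. srw_step E v y * first_hit n y)"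
proof -
  have ones: "(\<forall>i\<in>{1..<Suc n}. P i) \<longleftrightarrow> (\<forall>j<n. P (Suc j))" for P
    by (metis One_nat_def Suc_le_eq Suc_less_eq atLeastLessThan_iff less_Suc_eq_0_disj not_less0)
  have "first_return_paths E v (Suc n) = step_paths n v"
    unfolding first_return_paths_def step_paths_def ones by auto
  then show ?thesis
    unfolding first_return_prob_def
    using sum_step_paths[OF finite_nbrs, where x=v and n=n] first_hit_paths by (simp add: path_weight_def)
qed

lemma finite_punctured_ball: "finite (punctured_ball R)"
proof -
  have "finite (graph_ball R)" by (induction R) (auto simp: finite_nbrs)
  then show ?thesis by (simp add: punctured_ball_def)
qed

lemma deg_pos_punctured_ball: "x \<in> punctured_ball R \<Longrightarrow> deg E x > 0"
proof (induction R)
  case (Suc r)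
  show ?case
  proof (cases "x \<in> graph_ball r")
    case False
    then obtain y where "x \<in> nbrs E y" using Suc.prems by (auto simp: punctured_ball_def)
    then have "y \<in> nbrs E x" using symmetric by (simp add: nbrs_def)
    then show ?thesis by (rule deg_pos_if_nbr[OF finite_nbrs])
  qed (use Suc in \<open>auto simp: punctured_ball_def\<close>)
qed (simp add: punctured_ball_def)

lemma reversible_kernel_punctured_ball:
  "reversible_kernel (punctured_ball R) (\<lambda>x. real (deg E x)) (srw_step E)"
proof
  fix x assume x: "x \<in> punctured_ball R"
  then show "0 < real (deg E x)" using deg_pos_punctured_ball by simp
  have "(\<Sum>y\<in>punctured_ball R. E x y) = (\<Sum>y\<in>punctured_ball R \<inter> nbrs E x. E x y)"
    by (rule sum.mono_neutral_right) (auto simp: finite_punctured_ball nbrs_def)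
  also have "\<dots> \<le> deg E x"
    unfolding deg_def by (rule sum_mono2) (auto simp: finite_nbrs)
  finally have "(\<Sum>y\<in>punctured_ball R. real (E x y)) \<le> real (deg E x)"
    by (metis of_nat_le_iff of_nat_sum)
  then show "(\<Sum>y\<in>punctured_ball R. srw_step E x y) \<le> 1"
    using deg_pos_punctured_ball[OF x] by (simp add: srw_step_def sum_divide_distrib[symmetric])
qed (auto simp: finite_punctured_ball srw_step_def symmetric deg_pos_punctured_ball)

lemma killed_op_apply:
  "killed_op R f x = (if x \<in> punctured_ball R then \<Sum>y\<in>punctured_ball R. srw_step E x y * f y else 0)"
  unfolding killed_op_def reversible_kernel.A_def[OF reversible_kernel_punctured_ball] ..

text \<open>Truncation: a walk started within distance \<open>d\<close> of \<open>v\<close> that hits \<open>v\<close> within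
  \<open>n + 1\<close> steps never leaves the ball of radius \<open>d + n + 1\<close>, so its first-hitting
  probabilities are given by the killed operator on that ball.\<close>
lemma first_hit_killed_op:
  "y \<in> graph_ball d \<Longrightarrow> d + n + 1 \<le> R \<Longrightarrow>
     first_hit (Suc n) y = (killed_op R ^^ n) (return_vector R) y"
proof (induction n arbitrary: y d)
  case 0
  have "(\<Sum>z\<in>nbrs E y. srw_step E y z * (if z = v then 1 else 0)) = srw_step E y v"
    using finite_nbrs[of y] not_nbr_srw_step[of v E y] by (simp add: sum.delta' if_distrib cong: if_cong)
  moreover have "y \<in> graph_ball R" using graph_ball_mono[of d R] 0 by auto
  ultimately show ?case by (auto simp: return_vector_def punctured_ball_def)
next
  case (Suc n)
  let ?S = "punctured_ball R"
  let ?g = "(killed_op R ^^ n) (return_vector R)"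
  have y: "y \<in> graph_ball R" using graph_ball_mono[of d R] Suc.prems by auto
  show ?case
  proof (cases "y = v")
    case False
    then have yS: "y \<in> ?S" using y by (simp add: punctured_ball_def)
    have nbrs_S: "nbrs E y - {v} \<subseteq> ?S"
      using nbrs_subset_graph_ball[OF Suc.prems(1)] graph_ball_mono[of "Suc d" R] Suc.prems(2)
      by (auto simp: punctured_ball_def)
    have "first_hit (Suc (Suc n)) y = (\<Sum>z\<in>nbrs E y. srw_step E y z * first_hit (Suc n) z)"
      using False by simp
    also have "\<dots> = (\<Sum>z\<in>nbrs E y - {v}. srw_step E y z * first_hit (Suc n) z)"
      by (rule sum.mono_neutral_right) (auto simp: finite_nbrs)
    also have "\<dots> = (\<Sum>z\<in>nbrs E y - {v}. srw_step E y z * ?g z)"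
    proof (rule sum.cong[OF refl])
      fix z assume "z \<in> nbrs E y - {v}"
      then have "z \<in> graph_ball (Suc d)" using nbrs_subset_graph_ball[OF Suc.prems(1)] by blast
      then show "srw_step E y z * first_hit (Suc n) z = srw_step E y z * ?g z"
        using Suc.IH[of z "Suc d"] Suc.prems(2) by simp
    qed
    also have "\<dots> = (\<Sum>z\<in>?S. srw_step E y z * ?g z)"
      using nbrs_S finite_punctured_ball
      by (intro sum.mono_neutral_left) (auto simp: punctured_ball_def not_nbr_srw_step)
    also have "\<dots> = (killed_op R ^^ Suc n) (return_vector R) y"
      using yS by (simp add: killed_op_apply)
    finally show ?thesis .
  qed (simp add: killed_op_apply punctured_ball_def)
qed

text \<open>The first return probability as an inner product \<open>\<langle>h, A\<^sup>n h\<rangle> / deg v\<close>: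
  reversibility turns \<open>P(v,y)\<close> into \<open>deg y P(y,v) / deg v\<close>.\<close>
lemma first_return_prob_inner_product:
  assumes loop: "E v v = 0" and R: "n + 2 \<le> R"
  shows "first_return_prob E v (Suc (Suc n))
         = deg_ip R (return_vector R) ((killed_op R ^^ n) (return_vector R)) / real (deg E v)"
proof -
  let ?S = "punctured_ball R"
  let ?g = "(killed_op R ^^ n) (return_vector R)"
  have "nbrs E v \<subseteq> graph_ball R" using graph_ball_mono[of 1 R] R by auto
  moreover have "v \<notin> nbrs E v" using loop by (simp add: nbrs_def)
  ultimately have nbrs_S: "nbrs E v \<subseteq> ?S" by (auto simp: punctured_ball_def)
  have "first_return_prob E v (Suc (Suc n)) = (\<Sum>y\<in>nbrs E v. srw_step E v y * ?g y)"
    unfolding first_return_prob_first_hit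
    using first_hit_killed_op[of _ 1 n R] R by (intro sum.cong refl) auto
  also have "\<dots> = (\<Sum>y\<in>?S. srw_step E v y * ?g y)"
    using nbrs_S finite_punctured_ball by (intro sum.mono_neutral_left) (auto simp: not_nbr_srw_step)
  also have "\<dots> = (\<Sum>y\<in>?S. real (deg E y) * return_vector R y * ?g y / real (deg E v))"
    using deg_pos_punctured_ball
    by (intro sum.cong refl) (simp add: return_vector_def srw_step_def symmetric[of v])
  also have "\<dots> = deg_ip R (return_vector R) ?g / real (deg E v)"
    unfolding deg_ip_def reversible_kernel.ip_def[OF reversible_kernel_punctured_ball] sum_divide_distrib ..
  finally show ?thesis .
qed

text \<open>For every \<open>N\<close>, the first \<open>N + 1\<close> values of \<open>P\<^sub>v(\<tau>\<^sub>v = n + 2)\<close> are the moments of a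
  finite atomic measure on \<open>[-1,1]\<close>, by the spectral theorem on the ball of radius \<open>N + 2\<close>.\<close>
lemma first_return_moments:
  assumes loop: "E v v = 0"
  shows "\<exists>xs. atoms_in_interval xs \<and>
           (\<forall>n\<le>N. first_return_prob E v (Suc (Suc n)) = atom_sum xs (\<lambda>x. x^n))"
proof -
  let ?R = "Suc (Suc N)"
  interpret K: reversible_kernel "punctured_ball ?R" "\<lambda>x. real (deg E x)" "srw_step E"
    by (rule reversible_kernel_punctured_ball)
  have "return_vector ?R \<in> K.supported"
    unfolding K.supported_def return_vector_def by auto
  then obtain xs where xs: "atoms_in_interval xs"
    and moments: "\<And>n. deg_ip ?R (return_vector ?R) ((killed_op ?R ^^ n) (return_vector ?R))
                      = atom_sum xs (\<lambda>x. x^n)"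
    using K.spectral_moments unfolding killed_op_def deg_ip_def by blast
  show ?thesis
  proof (intro exI conjI allI impI)
    show "atoms_in_interval (map (\<lambda>(x,p). (x, p / real (deg E v))) xs)"
      by (rule atoms_in_interval_rescale[OF xs]) simp
    fix n assume "n \<le> N"
    then show "first_return_prob E v (Suc (Suc n))
               = atom_sum (map (\<lambda>(x,p). (x, p / real (deg E v))) xs) (\<lambda>x. x^n)"
      using first_return_prob_inner_product[OF loop, where n=n and R="?R"]
      by (simp add: moments atom_sum_rescale)
  qed
qed

end

end

theorem lemma2p2:
  fixes E :: "'a \<Rightarrow> 'a \<Rightarrow> nat" and v :: 'a
  assumes "infinite_connected_locally_finite_graph E"
  shows "\<exists>\<mu> :: real measure. sets \<mu> = sets borel \<and> finite_measure \<mu> \<and>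
           emeasure \<mu> (- {-1..1}) = 0 \<and>
           (\<forall>t::nat. t \<ge> 2 \<longrightarrow>
              first_return_prob E v t = (LINT x:{-1..1}|\<mu>. x ^ (t - 2)))"
proof -
  have finite_nbrs: "\<And>x. finite (nbrs E x)" and symmetric: "\<And>x y. E x y = E y x"
    and loop: "E v v = 0"
    using assms unfolding infinite_connected_locally_finite_graph_def by auto
  obtain \<mu> :: "real measure" where
    \<mu>: "sets \<mu> = sets borel" "finite_measure \<mu>" "emeasure \<mu> (- {-1..1}) = 0"
    and moments: "\<And>n. first_return_prob E v (Suc (Suc n)) = (LINT x:{-1..1}|\<mu>. x ^ n)"
    using measure_from_moments[OF first_return_moments[OF finite_nbrs symmetric loop]] by blast
  have "first_return_prob E v t = (LINT x:{-1..1}|\<mu>. x ^ (t - 2))" if "t \<ge> 2" for t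
  proof -
    have "t = Suc (Suc (t - 2))" using that by simp
    then show ?thesis using moments[of "t - 2"] by metis
  qed
  then show ?thesis using \<mu> by blast
qed

end
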